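(* Let $(\Omega,+)$ be a group and $(a,b)$ a pair of subgroups. Then: (1) the set $a^\top\cap{}^\top b=\{x: a\top x,\ x\top b\}$ is stable under $(x,y,z)\mapsto\Gamma(x,a,y,b,z)$, and with the induced law it is a torsor, denoted $U_{ab}$; (2) the set $b^\top\cap{}^\top a=\{x: b\top x,\ x\top a\}$ is stable under $(x,y,z)\mapsto\check\Gamma(x,a,y,b,z)$, and with the induced law it is a torsor, denoted $\check U_{ab}$; (3) $\check U_{ba}=U_{ab}^{opp}$, i.e. $\check U_{ba}$ (the set $a^\top\cap{}^\top b$ with law $\check\Gamma(x,b,y,a,z)$) coincides with the set $a^\top\cap{}^\top b$ with the opposite law $(x,y,z)\mapsto\Gamma(z,a,y,b,x)$.
   Context: $(\Omega,+)$ is a group written additively but not necessarily abelian. For subsets $x,y$, $x\top y$ means every $\omega$ has a unique decomposition $\omega=\xi+\eta$ with $\xi\in x,\eta\in y$. $\Gamma(x,a,y,b,z)=\{\omega:\exists\alpha\in a,\beta\in b:\ \alpha+\omega+\beta\in y,\ \alpha+\omega\in z,\ \omega+\beta\in x\}$; $\check\Gamma(x,a,y,b,z)=\{\omega:\exists\alpha\in a,\beta\in b:\ \beta+\omega+\alpha\in y,\ \omega+\alpha\in z,\ \beta+\omega\in x\}$. A torsor is a set with a ternary map $(xyz)$ satisfying $(xy(zuv))=(x(uzy)v)=((xyz)uv)$ and $(xxy)=y=(yxx)$. *)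

theory Defs
  imports Main
begin

text \<open>The group (Omega,+) is the ambient type of class group_add (additive, not
necessarily abelian).\<close>

definition is_subgroup :: "'a::group_add set \<Rightarrow> bool" where
  "is_subgroup H \<longleftrightarrow> 0 \<in> H \<and> (\<forall>x\<in>H. \<forall>y\<in>H. x + y \<in> H) \<and> (\<forall>x\<in>H. - x \<in> H)"

definition transv :: "'a::group_add set \<Rightarrow> 'a set \<Rightarrow> bool" where
  "transv x y \<longleftrightarrow> (\<forall>\<omega>. \<exists>!p. fst p \<in> x \<and> snd p \<in> y \<and> \<omega> = fst p + snd p)"

definition Gamma :: "'a::group_add set \<Rightarrow> 'a set \<Rightarrow> 'a set \<Rightarrow> 'a set \<Rightarrow> 'a set \<Rightarrow> 'a set" where
  "Gamma x a y b z = {\<omega>. \<exists>\<alpha>\<in>a. \<exists>\<beta>\<in>b. \<alpha> + \<omega> + \<beta> \<in> y \<and> \<alpha> + \<omega> \<in> z \<and> \<omega> + \<beta> \<in> x}"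

definition Gammac :: "'a::group_add set \<Rightarrow> 'a set \<Rightarrow> 'a set \<Rightarrow> 'a set \<Rightarrow> 'a set \<Rightarrow> 'a set" where
  "Gammac x a y b z = {\<omega>. \<exists>\<alpha>\<in>a. \<exists>\<beta>\<in>b. \<beta> + \<omega> + \<alpha> \<in> y \<and> \<omega> + \<alpha> \<in> z \<and> \<beta> + \<omega> \<in> x}"

definition is_torsor :: "'b set \<Rightarrow> ('b \<Rightarrow> 'b \<Rightarrow> 'b \<Rightarrow> 'b) \<Rightarrow> bool" where
  "is_torsor S m \<longleftrightarrow>
     (\<forall>x\<in>S. \<forall>y\<in>S. \<forall>z\<in>S. m x y z \<in> S) \<and>
     (\<forall>x\<in>S. \<forall>y\<in>S. \<forall>z\<in>S. \<forall>u\<in>S. \<forall>v\<in>S.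
        m x y (m z u v) = m x (m u z y) v \<and> m x (m u z y) v = m (m x y z) u v) \<and>
     (\<forall>x\<in>S. \<forall>y\<in>S. m x x y = y \<and> m y x x = y)"

definition U_carrier :: "'a::group_add set \<Rightarrow> 'a set \<Rightarrow> 'a set set" where
  "U_carrier a b = {x. transv a x \<and> transv x b}"

definition Uc_carrier :: "'a::group_add set \<Rightarrow> 'a set \<Rightarrow> 'a set set" where
  "Uc_carrier a b = {x. transv b x \<and> transv x a}"

end

theory Submission
  imports Defs
begin

text \<open>
  For a subgroup a, a \<top> x says that x meets every coset a + w in exactly one point, and
  x \<top> b that it meets every coset w + b in exactly one point. The torsor identities for \<Gamma>
  are mere rearrangements of the group elements in its definition and hold for arbitrary
  subsets; transversality is what makes \<Gamma> preserve a^\<top> \<inter> ^\<top>b, via these unique points, and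
  what forces \<Gamma>(x,a,x,b,y) = y = \<Gamma>(y,a,x,b,x). Since the check-law is \<Gamma> with a, b and the
  outer arguments swapped, parts (2) and (3) are part (1) for (b,a) read in the opposite torsor.
\<close>

lemma ex1_section_iff:
  assumes fh: "\<And>x. f (h x) = x"
  shows "(\<exists>!p. Q (f p) \<and> p = h (f p)) \<longleftrightarrow> (\<exists>!x. Q x)"
proof
  assume "\<exists>!p. Q (f p) \<and> p = h (f p)"
  then obtain p where p: "Q (f p)" and uniq: "\<forall>q. Q (f q) \<and> q = h (f q) \<longrightarrow> q = p"
    by (rule ex1E) blast
  show "\<exists>!x. Q x"
  proof (rule ex1I[of _ "f p"])
    show "Q (f p)" by (fact p)
    fix x assume "Q x"
    then have "h x = p" using uniq fh by simp
    then show "x = f p" using fh[of x] by simp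
  qed
next
  assume "\<exists>!x. Q x"
  then obtain x where x: "Q x" and uniq: "\<forall>y. Q y \<longrightarrow> y = x" by (rule ex1E)
  show "\<exists>!p. Q (f p) \<and> p = h (f p)"
  proof (rule ex1I[of _ "h x"])
    show "Q (f (h x)) \<and> h x = h (f (h x))" using x fh by simp
    fix p assume "Q (f p) \<and> p = h (f p)"
    then show "p = h x" using uniq by metis
  qed
qed

lemma bij_ex1_iff:
  assumes "bij g"
  shows "(\<exists>!x. P (g x)) \<longleftrightarrow> (\<exists>!y. P y)"
proof
  assume "\<exists>!x. P (g x)"
  then obtain x where x: "P (g x)" and uniq: "\<forall>x'. P (g x') \<longrightarrow> x' = x" by (rule ex1E)
  show "\<exists>!y. P y"
  proof (rule ex1I[of _ "g x"])
    show "P (g x)" by (fact x)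
    fix y assume "P y"
    then have "inv g y = x" using uniq bij_inv_eq_iff[OF assms] by metis
    then show "y = g x" using bij_inv_eq_iff[OF assms] by metis
  qed
next
  assume "\<exists>!y. P y"
  then obtain y where y: "P y" and uniq: "\<forall>y'. P y' \<longrightarrow> y' = y" by (rule ex1E)
  show "\<exists>!x. P (g x)"
  proof (rule ex1I[of _ "inv g y"])
    show "P (g (inv g y))" using y bij_inv_eq_iff[OF assms] by metis
    fix x assume "P (g x)"
    then show "x = inv g y" using uniq bij_inv_eq_iff[OF assms] by metis
  qed
qed

lemma subgroup_add: "is_subgroup a \<Longrightarrow> x \<in> a \<Longrightarrow> y \<in> a \<Longrightarrow> x + y \<in> a"
  and subgroup_uminus: "is_subgroup a \<Longrightarrow> x \<in> a \<Longrightarrow> - x \<in> a"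
  and subgroup_zero: "is_subgroup a \<Longrightarrow> 0 \<in> a"
  unfolding is_subgroup_def by blast+

lemma subgroup_uminus_iff: "is_subgroup a \<Longrightarrow> - x \<in> a \<longleftrightarrow> x \<in> a"
  using subgroup_uminus by fastforce

lemma transv_iff_ex1_left: "transv x y \<longleftrightarrow> (\<forall>w. \<exists>!\<xi>. \<xi> \<in> x \<and> - \<xi> + w \<in> y)"
  unfolding transv_def
proof (intro all_cong1)
  fix w
  have "fst p \<in> x \<and> snd p \<in> y \<and> w = fst p + snd p \<longleftrightarrow>
      (fst p \<in> x \<and> - fst p + w \<in> y) \<and> p = (fst p, - fst p + w)" for p
    by (cases p) (auto simp: add.assoc[symmetric])
  then show "(\<exists>!p. fst p \<in> x \<and> snd p \<in> y \<and> w = fst p + snd p) \<longleftrightarrow> (\<exists>!\<xi>. \<xi> \<in> x \<and> - \<xi> + w \<in> y)"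
    using ex1_section_iff[of fst "\<lambda>\<xi>. (\<xi>, - \<xi> + w)" "\<lambda>\<xi>. \<xi> \<in> x \<and> - \<xi> + w \<in> y"] by simp
qed

lemma transv_iff_ex1_right: "transv x y \<longleftrightarrow> (\<forall>w. \<exists>!\<eta>. \<eta> \<in> y \<and> w - \<eta> \<in> x)"
  unfolding transv_def
proof (intro all_cong1)
  fix w
  have "fst p \<in> x \<and> snd p \<in> y \<and> w = fst p + snd p \<longleftrightarrow>
      (snd p \<in> y \<and> w - snd p \<in> x) \<and> p = (w - snd p, snd p)" for p
    by (cases p) (auto simp: diff_eq_eq)
  then show "(\<exists>!p. fst p \<in> x \<and> snd p \<in> y \<and> w = fst p + snd p) \<longleftrightarrow> (\<exists>!\<eta>. \<eta> \<in> y \<and> w - \<eta> \<in> x)"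
    using ex1_section_iff[of snd "\<lambda>\<eta>. (w - \<eta>, \<eta>)" "\<lambda>\<eta>. \<eta> \<in> y \<and> w - \<eta> \<in> x"] by simp
qed

lemma transv_subgroup_left_iff:
  assumes "is_subgroup a"
  shows "transv a x \<longleftrightarrow> (\<forall>w. \<exists>!\<alpha>. \<alpha> \<in> a \<and> \<alpha> + w \<in> x)"
  unfolding transv_iff_ex1_left
  using bij_ex1_iff[OF bij_uminus, where P="\<lambda>\<xi>. \<xi> \<in> a \<and> - \<xi> + w \<in> x" for w, symmetric]
  by (simp add: subgroup_uminus_iff[OF assms])

lemma transv_subgroup_right_iff:
  assumes "is_subgroup b"
  shows "transv x b \<longleftrightarrow> (\<forall>w. \<exists>!\<beta>. \<beta> \<in> b \<and> w + \<beta> \<in> x)"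
  unfolding transv_iff_ex1_right
  using bij_ex1_iff[OF bij_uminus, where P="\<lambda>\<eta>. \<eta> \<in> b \<and> w - \<eta> \<in> x" for w, symmetric]
  by (simp add: subgroup_uminus_iff[OF assms])

lemma transv_subgroup_left_ex1:
  assumes "is_subgroup a" "transv a x"
  shows "\<exists>!\<alpha>. \<alpha> \<in> a \<and> \<alpha> + w \<in> x"
  using assms(2) unfolding transv_subgroup_left_iff[OF assms(1)] by (rule spec)

lemma transv_subgroup_left_ex:
  assumes "is_subgroup a" "transv a x"
  obtains \<alpha> where "\<alpha> \<in> a" "\<alpha> + w \<in> x"
  using ex1_implies_ex[OF transv_subgroup_left_ex1[OF assms]] by blast

lemma transv_subgroup_left_unique:
  assumes "is_subgroup a" "transv a x"
    and "\<alpha> \<in> a" "\<alpha> + w \<in> x" "\<alpha>' \<in> a" "\<alpha>' + w \<in> x"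
  shows "\<alpha> = \<alpha>'"
  using transv_subgroup_left_ex1[OF assms(1,2), of w] assms(3-6) by (elim alt_ex1E) blast

lemma transv_subgroup_right_ex1:
  assumes "is_subgroup b" "transv x b"
  shows "\<exists>!\<beta>. \<beta> \<in> b \<and> w + \<beta> \<in> x"
  using assms(2) unfolding transv_subgroup_right_iff[OF assms(1)] by (rule spec)

lemma transv_subgroup_right_ex:
  assumes "is_subgroup b" "transv x b"
  obtains \<beta> where "\<beta> \<in> b" "w + \<beta> \<in> x"
  using ex1_implies_ex[OF transv_subgroup_right_ex1[OF assms]] by blast

lemma transv_subgroup_right_unique:
  assumes "is_subgroup b" "transv x b"
    and "\<beta> \<in> b" "w + \<beta> \<in> x" "\<beta>' \<in> b" "w + \<beta>' \<in> x"
  shows "\<beta> = \<beta>'"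
  using transv_subgroup_right_ex1[OF assms(1,2), of w] assms(3-6) by (elim alt_ex1E) blast

text \<open>
  No transversality is needed here: each bracketing unfolds to a zigzag
  \<omega>+\<beta> \<in> x, \<alpha>+\<omega>+\<beta> \<in> y, \<alpha>+\<omega>+\<beta>' \<in> z, \<alpha>'+\<omega>+\<beta>' \<in> u, \<alpha>'+\<omega> \<in> v
  with \<alpha>, \<alpha>' \<in> a and \<beta>, \<beta>' \<in> b, and the witnesses below just reparametrise it.
\<close>

lemma Gamma_assoc_right_middle:
  assumes a: "is_subgroup a" and b: "is_subgroup b"
  shows "Gamma x a y b (Gamma z a u b v) = Gamma x a (Gamma u a z b y) b v"
proof (rule set_eqI, rule iffI)
  fix \<omega> assume "\<omega> \<in> Gamma x a y b (Gamma z a u b v)"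
  then obtain \<alpha> \<beta> \<alpha>' \<beta>' where
    ab: "\<alpha> \<in> a" "\<beta> \<in> b" "\<alpha>' \<in> a" "\<beta>' \<in> b" and
    mem: "\<omega> + \<beta> \<in> x" "\<alpha> + \<omega> + \<beta> \<in> y" "\<alpha> + \<omega> + \<beta>' \<in> z"
      "\<alpha>' + (\<alpha> + \<omega>) + \<beta>' \<in> u" "\<alpha>' + (\<alpha> + \<omega>) \<in> v"
    unfolding Gamma_def by blast
  have "- \<alpha>' + (\<alpha>' + \<alpha> + \<omega> + \<beta>) + (- \<beta> + \<beta>') \<in> z"
       "- \<alpha>' + (\<alpha>' + \<alpha> + \<omega> + \<beta>) \<in> y"
       "\<alpha>' + \<alpha> + \<omega> + \<beta> + (- \<beta> + \<beta>') \<in> u"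
    using mem by (simp_all add: add.assoc diff_conv_add_uminus del: add_uminus_conv_diff)
  then have "\<alpha>' + \<alpha> + \<omega> + \<beta> \<in> Gamma u a z b y"
    unfolding Gamma_def using ab a b by (blast intro: subgroup_add subgroup_uminus)
  moreover have "\<alpha>' + \<alpha> + \<omega> \<in> v" using mem by (simp add: add.assoc)
  ultimately show "\<omega> \<in> Gamma x a (Gamma u a z b y) b v"
    unfolding Gamma_def using ab mem a by (blast intro: subgroup_add)
next
  fix \<omega> assume "\<omega> \<in> Gamma x a (Gamma u a z b y) b v"
  then obtain \<gamma> \<delta> \<gamma>' \<delta>' where
    ab: "\<gamma> \<in> a" "\<delta> \<in> b" "\<gamma>' \<in> a" "\<delta>' \<in> b" and
    mem: "\<omega> + \<delta> \<in> x" "\<gamma> + \<omega> \<in> v" "\<gamma>' + (\<gamma> + \<omega> + \<delta>) + \<delta>' \<in> z"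
      "\<gamma>' + (\<gamma> + \<omega> + \<delta>) \<in> y" "\<gamma> + \<omega> + \<delta> + \<delta>' \<in> u"
    unfolding Gamma_def by blast
  have "- \<gamma>' + (\<gamma>' + \<gamma> + \<omega>) + (\<delta> + \<delta>') \<in> u"
       "- \<gamma>' + (\<gamma>' + \<gamma> + \<omega>) \<in> v"
       "\<gamma>' + \<gamma> + \<omega> + (\<delta> + \<delta>') \<in> z"
    using mem by (simp_all add: add.assoc diff_conv_add_uminus del: add_uminus_conv_diff)
  then have "\<gamma>' + \<gamma> + \<omega> \<in> Gamma z a u b v"
    unfolding Gamma_def using ab a b by (blast intro: subgroup_add subgroup_uminus)
  moreover have "\<gamma>' + \<gamma> + \<omega> + \<delta> \<in> y" using mem by (simp add: add.assoc)
  ultimately show "\<omega> \<in> Gamma x a y b (Gamma z a u b v)"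
    unfolding Gamma_def using ab mem a by (blast intro: subgroup_add)
qed

lemma Gamma_assoc_middle_left:
  assumes a: "is_subgroup a" and b: "is_subgroup b"
  shows "Gamma x a (Gamma u a z b y) b v = Gamma (Gamma x a y b z) a u b v"
proof (rule set_eqI, rule iffI)
  fix \<omega> assume "\<omega> \<in> Gamma x a (Gamma u a z b y) b v"
  then obtain \<gamma> \<delta> \<gamma>' \<delta>' where
    ab: "\<gamma> \<in> a" "\<delta> \<in> b" "\<gamma>' \<in> a" "\<delta>' \<in> b" and
    mem: "\<omega> + \<delta> \<in> x" "\<gamma> + \<omega> \<in> v" "\<gamma>' + (\<gamma> + \<omega> + \<delta>) + \<delta>' \<in> z"
      "\<gamma>' + (\<gamma> + \<omega> + \<delta>) \<in> y" "\<gamma> + \<omega> + \<delta> + \<delta>' \<in> u"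
    unfolding Gamma_def by blast
  have "\<gamma>' + \<gamma> + (\<omega> + (\<delta> + \<delta>')) + - \<delta>' \<in> y"
       "\<gamma>' + \<gamma> + (\<omega> + (\<delta> + \<delta>')) \<in> z"
       "\<omega> + (\<delta> + \<delta>') + - \<delta>' \<in> x"
    using mem by (simp_all add: add.assoc diff_conv_add_uminus del: add_uminus_conv_diff)
  then have "\<omega> + (\<delta> + \<delta>') \<in> Gamma x a y b z"
    unfolding Gamma_def using ab a b by (blast intro: subgroup_add subgroup_uminus)
  moreover have "\<gamma> + \<omega> + (\<delta> + \<delta>') \<in> u" using mem by (simp add: add.assoc)
  ultimately show "\<omega> \<in> Gamma (Gamma x a y b z) a u b v"
    unfolding Gamma_def using ab mem b by (blast intro: subgroup_add)
next
  fix \<omega> assume "\<omega> \<in> Gamma (Gamma x a y b z) a u b v"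
  then obtain \<alpha> \<beta> \<alpha>' \<beta>' where
    ab: "\<alpha> \<in> a" "\<beta> \<in> b" "\<alpha>' \<in> a" "\<beta>' \<in> b" and
    mem: "\<alpha> + \<omega> \<in> v" "\<alpha> + \<omega> + \<beta> \<in> u" "\<alpha>' + (\<omega> + \<beta>) + \<beta>' \<in> y"
      "\<alpha>' + (\<omega> + \<beta>) \<in> z" "\<omega> + \<beta> + \<beta>' \<in> x"
    unfolding Gamma_def by blast
  have "(\<alpha>' + - \<alpha>) + (\<alpha> + \<omega> + (\<beta> + \<beta>')) + - \<beta>' \<in> z"
       "(\<alpha>' + - \<alpha>) + (\<alpha> + \<omega> + (\<beta> + \<beta>')) \<in> y"
       "\<alpha> + \<omega> + (\<beta> + \<beta>') + - \<beta>' \<in> u"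
    using mem by (simp_all add: add.assoc diff_conv_add_uminus del: add_uminus_conv_diff)
  then have "\<alpha> + \<omega> + (\<beta> + \<beta>') \<in> Gamma u a z b y"
    unfolding Gamma_def using ab a b by (blast intro: subgroup_add subgroup_uminus)
  moreover have "\<omega> + (\<beta> + \<beta>') \<in> x" using mem by (simp add: add.assoc)
  ultimately show "\<omega> \<in> Gamma x a (Gamma u a z b y) b v"
    unfolding Gamma_def using ab mem b by (blast intro: subgroup_add)
qed

lemma Gamma_idem_left:
  assumes a: "is_subgroup a" and b: "is_subgroup b" and x: "transv a x" "transv x b"
  shows "Gamma x a x b y = y"
proof (rule set_eqI, rule iffI)
  fix \<omega> assume "\<omega> \<in> Gamma x a x b y"
  then obtain \<alpha> \<beta> where "\<alpha> \<in> a" "\<beta> \<in> b" "\<alpha> + (\<omega> + \<beta>) \<in> x" "\<alpha> + \<omega> \<in> y" "0 + (\<omega> + \<beta>) \<in> x"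
    unfolding Gamma_def by (auto simp: add.assoc)
  moreover have "0 \<in> a" using a by (rule subgroup_zero)
  ultimately show "\<omega> \<in> y"
    using transv_subgroup_left_unique[OF a x(1)] by fastforce
next
  fix \<omega> assume "\<omega> \<in> y"
  moreover obtain \<beta> where "\<beta> \<in> b" "\<omega> + \<beta> \<in> x" using transv_subgroup_right_ex[OF b x(2)] by blast
  moreover have "0 \<in> a" using a by (rule subgroup_zero)
  ultimately show "\<omega> \<in> Gamma x a x b y" unfolding Gamma_def by force
qed

lemma Gamma_idem_right:
  assumes a: "is_subgroup a" and b: "is_subgroup b" and x: "transv a x" "transv x b"
  shows "Gamma y a x b x = y"
proof (rule set_eqI, rule iffI)
  fix \<omega> assume "\<omega> \<in> Gamma y a x b x"
  then obtain \<alpha> \<beta> where "\<alpha> \<in> a" "\<beta> \<in> b" "\<alpha> + \<omega> + \<beta> \<in> x" "\<alpha> + \<omega> + 0 \<in> x" "\<omega> + \<beta> \<in> y"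
    unfolding Gamma_def by auto
  moreover have "0 \<in> b" using b by (rule subgroup_zero)
  ultimately show "\<omega> \<in> y"
    using transv_subgroup_right_unique[OF b x(2)] by fastforce
next
  fix \<omega> assume "\<omega> \<in> y"
  moreover obtain \<alpha> where "\<alpha> \<in> a" "\<alpha> + \<omega> \<in> x" using transv_subgroup_left_ex[OF a x(1)] by blast
  moreover have "0 \<in> b" using b by (rule subgroup_zero)
  ultimately show "\<omega> \<in> Gamma y a x b x" unfolding Gamma_def by force
qed

lemma transv_Gamma_left:
  assumes a: "is_subgroup a" and b: "is_subgroup b"
    and x: "transv a x" and y: "transv y b" and z: "transv a z"
  shows "transv a (Gamma x a y b z)"
  unfolding transv_subgroup_left_iff[OF a]
proof
  fix w
  obtain \<alpha>\<^sub>0 where \<alpha>\<^sub>0: "\<alpha>\<^sub>0 \<in> a" "\<alpha>\<^sub>0 + w \<in> z"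
    using transv_subgroup_left_ex[OF a z] by blast
  obtain \<beta> where \<beta>: "\<beta> \<in> b" "\<alpha>\<^sub>0 + w + \<beta> \<in> y"
    using transv_subgroup_right_ex[OF b y] by blast
  obtain \<alpha> where \<alpha>: "\<alpha> \<in> a" "\<alpha> + (w + \<beta>) \<in> x"
    using transv_subgroup_left_ex[OF a x] by blast
  have "\<alpha>\<^sub>0 + - \<alpha> \<in> a"
    using \<alpha>\<^sub>0 \<alpha> a by (blast intro: subgroup_add subgroup_uminus)
  moreover have "\<alpha>\<^sub>0 + - \<alpha> + (\<alpha> + w) + \<beta> \<in> y" "\<alpha>\<^sub>0 + - \<alpha> + (\<alpha> + w) \<in> z"
    "\<alpha> + w + \<beta> \<in> x"
    using \<alpha>\<^sub>0 \<beta> \<alpha> by (simp_all add: add.assoc[symmetric])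
  ultimately have "\<alpha> + w \<in> Gamma x a y b z"
    unfolding Gamma_def using \<beta>(1) by blast
  moreover have "\<alpha>\<^sub>1 = \<alpha>\<^sub>2"
    if mem: "\<alpha>\<^sub>1 \<in> a" "\<alpha>\<^sub>1 + w \<in> Gamma x a y b z" "\<alpha>\<^sub>2 \<in> a" "\<alpha>\<^sub>2 + w \<in> Gamma x a y b z" for \<alpha>\<^sub>1 \<alpha>\<^sub>2
  proof -
    obtain \<alpha>\<^sub>1' \<beta>\<^sub>1 where 1: "\<alpha>\<^sub>1' \<in> a" "\<beta>\<^sub>1 \<in> b" "(\<alpha>\<^sub>1' + \<alpha>\<^sub>1) + w + \<beta>\<^sub>1 \<in> y"
        "(\<alpha>\<^sub>1' + \<alpha>\<^sub>1) + w \<in> z" "\<alpha>\<^sub>1 + (w + \<beta>\<^sub>1) \<in> x"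
      using mem(2) unfolding Gamma_def by (auto simp: add.assoc)
    obtain \<alpha>\<^sub>2' \<beta>\<^sub>2 where 2: "\<alpha>\<^sub>2' \<in> a" "\<beta>\<^sub>2 \<in> b" "(\<alpha>\<^sub>2' + \<alpha>\<^sub>2) + w + \<beta>\<^sub>2 \<in> y"
        "(\<alpha>\<^sub>2' + \<alpha>\<^sub>2) + w \<in> z" "\<alpha>\<^sub>2 + (w + \<beta>\<^sub>2) \<in> x"
      using mem(4) unfolding Gamma_def by (auto simp: add.assoc)
    have "\<alpha>\<^sub>1' + \<alpha>\<^sub>1 = \<alpha>\<^sub>2' + \<alpha>\<^sub>2"
      using transv_subgroup_left_unique[OF a z] 1(1,4) 2(1,4) mem(1,3) subgroup_add[OF a] by blast
    then have "\<beta>\<^sub>1 = \<beta>\<^sub>2"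
      using transv_subgroup_right_unique[OF b y] 1(2,3) 2(2,3) by simp
    then show "\<alpha>\<^sub>1 = \<alpha>\<^sub>2"
      using transv_subgroup_left_unique[OF a x] 1(5) 2(5) mem(1,3) by blast
  qed
  ultimately show "\<exists>!\<alpha>. \<alpha> \<in> a \<and> \<alpha> + w \<in> Gamma x a y b z"
    using \<alpha>(1) by (intro ex1I[of _ \<alpha>]) blast+
qed

lemma transv_Gamma_right:
  assumes a: "is_subgroup a" and b: "is_subgroup b"
    and x: "transv x b" and y: "transv a y" and z: "transv z b"
  shows "transv (Gamma x a y b z) b"
  unfolding transv_subgroup_right_iff[OF b]
proof
  fix w
  obtain \<beta>\<^sub>0 where \<beta>\<^sub>0: "\<beta>\<^sub>0 \<in> b" "w + \<beta>\<^sub>0 \<in> x"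
    using transv_subgroup_right_ex[OF b x] by blast
  obtain \<alpha> where \<alpha>: "\<alpha> \<in> a" "\<alpha> + (w + \<beta>\<^sub>0) \<in> y"
    using transv_subgroup_left_ex[OF a y] by blast
  obtain \<beta> where \<beta>: "\<beta> \<in> b" "\<alpha> + w + \<beta> \<in> z"
    using transv_subgroup_right_ex[OF b z] by blast
  have "- \<beta> + \<beta>\<^sub>0 \<in> b"
    using \<beta>\<^sub>0 \<beta> b by (blast intro: subgroup_add subgroup_uminus)
  moreover have "\<alpha> + (w + \<beta>) + (- \<beta> + \<beta>\<^sub>0) \<in> y" "\<alpha> + (w + \<beta>) \<in> z"
    "w + \<beta> + (- \<beta> + \<beta>\<^sub>0) \<in> x"
    using \<beta>\<^sub>0 \<alpha> \<beta> by (simp_all add: add.assoc)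
  ultimately have "w + \<beta> \<in> Gamma x a y b z"
    unfolding Gamma_def using \<alpha>(1) by blast
  moreover have "\<beta>\<^sub>1 = \<beta>\<^sub>2"
    if mem: "\<beta>\<^sub>1 \<in> b" "w + \<beta>\<^sub>1 \<in> Gamma x a y b z" "\<beta>\<^sub>2 \<in> b" "w + \<beta>\<^sub>2 \<in> Gamma x a y b z" for \<beta>\<^sub>1 \<beta>\<^sub>2
  proof -
    obtain \<alpha>\<^sub>1 \<beta>\<^sub>1' where 1: "\<alpha>\<^sub>1 \<in> a" "\<beta>\<^sub>1' \<in> b" "\<alpha>\<^sub>1 + (w + (\<beta>\<^sub>1 + \<beta>\<^sub>1')) \<in> y"
        "\<alpha>\<^sub>1 + w + \<beta>\<^sub>1 \<in> z" "w + (\<beta>\<^sub>1 + \<beta>\<^sub>1') \<in> x"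
      using mem(2) unfolding Gamma_def by (auto simp: add.assoc)
    obtain \<alpha>\<^sub>2 \<beta>\<^sub>2' where 2: "\<alpha>\<^sub>2 \<in> a" "\<beta>\<^sub>2' \<in> b" "\<alpha>\<^sub>2 + (w + (\<beta>\<^sub>2 + \<beta>\<^sub>2')) \<in> y"
        "\<alpha>\<^sub>2 + w + \<beta>\<^sub>2 \<in> z" "w + (\<beta>\<^sub>2 + \<beta>\<^sub>2') \<in> x"
      using mem(4) unfolding Gamma_def by (auto simp: add.assoc)
    have "\<beta>\<^sub>1 + \<beta>\<^sub>1' = \<beta>\<^sub>2 + \<beta>\<^sub>2'"
      using transv_subgroup_right_unique[OF b x] 1(2,5) 2(2,5) mem(1,3) subgroup_add[OF b] by blast
    then have "\<alpha>\<^sub>1 = \<alpha>\<^sub>2"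
      using transv_subgroup_left_unique[OF a y] 1(1,3) 2(1,3) by simp
    then show "\<beta>\<^sub>1 = \<beta>\<^sub>2"
      using transv_subgroup_right_unique[OF b z] 1(4) 2(4) mem(1,3) by blast
  qed
  ultimately show "\<exists>!\<beta>. \<beta> \<in> b \<and> w + \<beta> \<in> Gamma x a y b z"
    using \<beta>(1) by (intro ex1I[of _ \<beta>]) blast+
qed

lemma Gamma_U_carrier:
  assumes "is_subgroup a" "is_subgroup b"
    and "x \<in> U_carrier a b" "y \<in> U_carrier a b" "z \<in> U_carrier a b"
  shows "Gamma x a y b z \<in> U_carrier a b"
  using assms transv_Gamma_left[OF assms(1,2)] transv_Gamma_right[OF assms(1,2)]
  by (simp add: U_carrier_def)

lemma is_torsor_U_carrier:
  assumes "is_subgroup a" "is_subgroup b"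
  shows "is_torsor (U_carrier a b) (\<lambda>x y z. Gamma x a y b z)"
  unfolding is_torsor_def
proof (intro conjI ballI)
  fix x y assume "x \<in> U_carrier a b"
  then show "Gamma x a x b y = y" "Gamma y a x b x = y"
    using Gamma_idem_left[OF assms] Gamma_idem_right[OF assms] by (simp_all add: U_carrier_def)
qed (simp_all add: Gamma_U_carrier[OF assms] Gamma_assoc_right_middle[OF assms]
      Gamma_assoc_middle_left[OF assms])

lemma is_torsor_opposite:
  assumes "is_torsor S m"
  shows "is_torsor S (\<lambda>x y z. m z y x)"
  using assms unfolding is_torsor_def by simp

lemma Gammac_eq_Gamma: "Gammac x a y b z = Gamma z b y a x"
  unfolding Gammac_def Gamma_def by blast

lemma Uc_carrier_eq_U_carrier: "Uc_carrier a b = U_carrier b a"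
  unfolding Uc_carrier_def U_carrier_def by blast

theorem theorem7p3:
  fixes a b :: "'a::group_add set"
  assumes "is_subgroup a" and "is_subgroup b"
  shows "(\<forall>x\<in>U_carrier a b. \<forall>y\<in>U_carrier a b. \<forall>z\<in>U_carrier a b.
            Gamma x a y b z \<in> U_carrier a b)
       \<and> is_torsor (U_carrier a b) (\<lambda>x y z. Gamma x a y b z)
       \<and> (\<forall>x\<in>Uc_carrier a b. \<forall>y\<in>Uc_carrier a b. \<forall>z\<in>Uc_carrier a b.
            Gammac x a y b z \<in> Uc_carrier a b)
       \<and> is_torsor (Uc_carrier a b) (\<lambda>x y z. Gammac x a y b z)
       \<and> Uc_carrier b a = U_carrier a b
       \<and> (\<forall>x\<in>Uc_carrier b a. \<forall>y\<in>Uc_carrier b a. \<forall>z\<in>Uc_carrier b a.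
            Gammac x b y a z = Gamma z a y b x)"
  using Gamma_U_carrier[OF assms] Gamma_U_carrier[OF assms(2,1)] is_torsor_U_carrier[OF assms]
    is_torsor_opposite[OF is_torsor_U_carrier[OF assms(2,1)]]
  by (simp add: Gammac_eq_Gamma Uc_carrier_eq_U_carrier)

end
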